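(* Let $T:\mathcal{M}_2(\mathbb{C})\to\mathcal{M}_2(\mathbb{C})$ be a positive trace-preserving linear map and $\Lambda:=\mathrm{spec}(T)$. Then (1) $1\in\Lambda$ and $\Lambda$ is invariant under complex conjugation (as a multiset), and (2) $|\lambda|\le1$ for all $\lambda\in\Lambda$. Conversely, if a multiset $\Lambda$ of four complex numbers satisfies (1) and (2), then there is a unital, trace-preserving, positive linear map $T$ on $\mathcal{M}_2(\mathbb{C})$ with $\mathrm{spec}(T)=\Lambda$.
   Context: A linear map on $\mathcal{M}_d(\mathbb{C})$ is positive if it maps positive semidefinite matrices to positive semidefinite matrices, trace-preserving if $\mathrm{tr}[T(X)]=\mathrm{tr}[X]$, unital if $T(\mathbbm{1})=\mathbbm{1}$. $\mathrm{spec}(T)$ is the spectrum of $T$ as a linear operator on $\mathcal{M}_2(\mathbb{C})$, counted with algebraic multiplicity. *)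

theory Defs
  imports "Jordan_Normal_Form.Matrix" "Jordan_Normal_Form.Char_Poly"
    "HOL-Computational_Algebra.Polynomial"
begin

definition tr2 :: "complex mat \<Rightarrow> complex" where
  "tr2 A = A $$ (0,0) + A $$ (1,1)"

definition adj2 :: "complex mat \<Rightarrow> complex mat" where
  "adj2 A = mat 2 2 (\<lambda>(i,j). cnj (A $$ (j,i)))"

definition psd2 :: "complex mat \<Rightarrow> bool" where
  "psd2 A \<longleftrightarrow> A \<in> carrier_mat 2 2 \<and> adj2 A = A \<and>
     (\<forall>v :: nat \<Rightarrow> complex.
        let q = (\<Sum>i<2. \<Sum>j<2. cnj (v i) * A $$ (i,j) * v j) in Im q = 0 \<and> Re q \<ge> 0)"

definition linear_M2 :: "(complex mat \<Rightarrow> complex mat) \<Rightarrow> bool" where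
  "linear_M2 T \<longleftrightarrow>
     (\<forall>A \<in> carrier_mat 2 2. T A \<in> carrier_mat 2 2) \<and>
     (\<forall>A \<in> carrier_mat 2 2. \<forall>B \<in> carrier_mat 2 2. T (A + B) = T A + T B) \<and>
     (\<forall>A \<in> carrier_mat 2 2. \<forall>c. T (c \<cdot>\<^sub>m A) = c \<cdot>\<^sub>m T A)"

definition positive_M2 :: "(complex mat \<Rightarrow> complex mat) \<Rightarrow> bool" where
  "positive_M2 T \<longleftrightarrow> (\<forall>A. psd2 A \<longrightarrow> psd2 (T A))"

definition trace_preserving_M2 :: "(complex mat \<Rightarrow> complex mat) \<Rightarrow> bool" where
  "trace_preserving_M2 T \<longleftrightarrow> (\<forall>A \<in> carrier_mat 2 2. tr2 (T A) = tr2 A)"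

definition unital_M2 :: "(complex mat \<Rightarrow> complex mat) \<Rightarrow> bool" where
  "unital_M2 T \<longleftrightarrow> T (1\<^sub>m 2) = 1\<^sub>m 2"

definition munit2 :: "nat \<Rightarrow> complex mat" where
  "munit2 l = mat 2 2 (\<lambda>(i,j). if i = l div 2 \<and> j = l mod 2 then 1 else 0)"

text \<open>The 4x4 matrix of T in the basis of matrix units.\<close>
definition op_mat :: "(complex mat \<Rightarrow> complex mat) \<Rightarrow> complex mat" where
  "op_mat T = mat 4 4 (\<lambda>(k,l). T (munit2 l) $$ (k div 2, k mod 2))"

definition spec_M2 :: "(complex mat \<Rightarrow> complex mat) \<Rightarrow> complex multiset" where
  "spec_M2 T = proots (char_poly (op_mat T))"

end

theory Submission
  imports Defs
begin

(* M_2(C) has a basis of four positive semidefinite matrices (the diagonal matrix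
   units, the all-ones matrix and [[1,-i],[i,1]]); hence a positive map commutes with the
   adjoint.  In the basis of matrix units this says that the representing 4x4 matrix op_mat T
   is similar, via the permutation exchanging E_01 and E_10, to its entrywise conjugate, so its
   characteristic roots form a conjugation-invariant multiset.  Trace preservation says that
   the trace functional is a left eigenvector for the eigenvalue 1.  The iterates T^n are again
   positive and trace preserving and a PSD matrix has entries bounded by its trace, so
   expanding an eigenmatrix in the PSD basis bounds |z|^n uniformly in n; hence |z| <= 1.

   An admissible multiset is {1, r, p, q} with r real and p, q real or conjugate.
   The model map mixing the diagonal with weight a = (1+r)/2 and acting on the off-diagonal
   pair by (x01, x10) |-> (u x01 + cnj w x10, w x01 + cnj u x10), |u| + |w| <= 1, is unital,
   trace preserving and positive; its spectrum is {1, 2a-1} together with the roots of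
   (x-u)(x-cnj u) - |w|^2, and u, w can be chosen so that these roots are p and q. *)

lemma less_2_iff: "(i::nat) < 2 \<longleftrightarrow> i = 0 \<or> i = 1" by auto

lemma less_4_iff: "(k::nat) < 4 \<longleftrightarrow> k = 0 \<or> k = 1 \<or> k = 2 \<or> k = 3" by auto

definition qform2 :: "complex mat \<Rightarrow> (nat \<Rightarrow> complex) \<Rightarrow> complex" where
  "qform2 A v = (\<Sum>i<2. \<Sum>j<2. cnj (v i) * A $$ (i,j) * v j)"

lemma psd2_qform2:
  "psd2 A \<longleftrightarrow> A \<in> carrier_mat 2 2 \<and> adj2 A = A \<and> (\<forall>v. Im (qform2 A v) = 0 \<and> Re (qform2 A v) \<ge> 0)"
  unfolding psd2_def qform2_def Let_def by simp

lemma qform2_expand: "qform2 A v =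
    cnj (v 0) * A$$(0,0) * v 0 + cnj (v 0) * A$$(0,1) * v 1 + cnj (v 1) * A$$(1,0) * v 0 + cnj (v 1) * A$$(1,1) * v 1"
  by (simp add: qform2_def numeral_2_eq_2 add.assoc)

lemma hermitian2_iff:
  assumes "A \<in> carrier_mat 2 2"
  shows "adj2 A = A \<longleftrightarrow> Im (A$$(0,0)) = 0 \<and> Im (A$$(1,1)) = 0 \<and> A$$(1,0) = cnj (A$$(0,1))"
proof
  assume "adj2 A = A"
  hence "\<And>i j. i < 2 \<Longrightarrow> j < 2 \<Longrightarrow> cnj (A $$ (j,i)) = A $$ (i,j)"
    by (metis (no_types, lifting) adj2_def case_prod_conv index_mat(1))
  from this[of 0 0] this[of 1 1] this[of 1 0] show "Im (A$$(0,0)) = 0 \<and> Im (A$$(1,1)) = 0 \<and> A$$(1,0) = cnj (A$$(0,1))"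
    by (auto simp: complex_eq_iff)
next
  assume "Im (A$$(0,0)) = 0 \<and> Im (A$$(1,1)) = 0 \<and> A$$(1,0) = cnj (A$$(0,1))"
  thus "adj2 A = A"
    by (intro eq_matI) (use assms in \<open>auto simp: adj2_def less_2_iff complex_eq_iff\<close>)
qed

lemma qform2_hermitian:
  assumes "A$$(0,0) = of_real a" "A$$(1,1) = of_real d" "A$$(1,0) = cnj (A$$(0,1))"
  shows "qform2 A v = of_real (a * (cmod (v 0))\<^sup>2 + d * (cmod (v 1))\<^sup>2 + 2 * Re (cnj (v 0) * A$$(0,1) * v 1))"
  unfolding qform2_expand assms cmod_power2
  by (simp add: complex_eq_iff algebra_simps power2_eq_square)

lemma psd2_imp_entries:
  assumes "psd2 A"
  shows "A$$(1,0) = cnj (A$$(0,1)) \<and> Im (A$$(0,0)) = 0 \<and> Im (A$$(1,1)) = 0 \<and>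
    Re (A$$(0,0)) \<ge> 0 \<and> Re (A$$(1,1)) \<ge> 0 \<and> (cmod (A$$(0,1)))\<^sup>2 \<le> Re (A$$(0,0)) * Re (A$$(1,1))"
proof -
  define a d b where "a = Re (A$$(0,0))" and "d = Re (A$$(1,1))" and "b = A$$(0,1)"
  have car: "A \<in> carrier_mat 2 2" and herm: "adj2 A = A"
    and q: "\<And>v. Re (qform2 A v) \<ge> 0" using assms unfolding psd2_qform2 by auto
  have im: "Im (A$$(0,0)) = 0" "Im (A$$(1,1)) = 0" and A10: "A$$(1,0) = cnj b"
    using herm unfolding hermitian2_iff[OF car] b_def by auto
  have A00: "A$$(0,0) = of_real a" and A11: "A$$(1,1) = of_real d"
    using im unfolding a_def d_def by (simp_all add: complex_eq_iff)
  have Req: "Re (qform2 A v) = a * (cmod (v 0))\<^sup>2 + d * (cmod (v 1))\<^sup>2 + 2 * Re (cnj (v 0) * b * v 1)" for v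
    using qform2_hermitian[OF A00 A11] A10 b_def by simp
  have a0: "a \<ge> 0" using q[of "\<lambda>i. if i = 0 then 1 else 0"] unfolding Req by simp
  have d0: "d \<ge> 0" using q[of "\<lambda>i. if i = 0 then 0 else 1"] unfolding Req by simp
  have "a * (a * d - (cmod b)\<^sup>2) \<ge> 0"
    using q[of "\<lambda>i. if i = 0 then - b else of_real a"] unfolding Req cmod_power2
    by (simp add: algebra_simps power2_eq_square)
  moreover have "d * (a * d - (cmod b)\<^sup>2) \<ge> 0"
    using q[of "\<lambda>i. if i = 0 then of_real d else - cnj b"] unfolding Req cmod_power2
    by (simp add: algebra_simps power2_eq_square)
  moreover have "a - 2 * (cmod b)\<^sup>2 + d * (cmod b)\<^sup>2 \<ge> 0"
    using q[of "\<lambda>i. if i = 0 then 1 else - cnj b"] unfolding Req cmod_power2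
    by (simp add: algebra_simps power2_eq_square)
  ultimately have "(cmod b)\<^sup>2 \<le> a * d"
    using a0 d0 by (cases "a > 0"; cases "d > 0") (auto simp: zero_le_mult_iff)
  thus ?thesis using A10 im a0 d0 unfolding a_def d_def b_def by simp
qed

lemma real_quadratic_form_nonneg:
  fixes a d B s t :: real
  assumes "0 \<le> a" "0 \<le> d" "B\<^sup>2 \<le> a * d"
  shows "2 * B * s * t \<le> a * s\<^sup>2 + d * t\<^sup>2"
proof (cases "a = 0")
  case True
  with assms have "B = 0" by simp
  with assms show ?thesis by simp
next
  case False
  with assms have "a > 0" by simp
  have "a * (a * s\<^sup>2 + d * t\<^sup>2 - 2 * B * s * t) = (a*s - B*t)\<^sup>2 + (a*d - B\<^sup>2) * t\<^sup>2"
    by (simp add: power2_eq_square algebra_simps)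
  also have "\<dots> \<ge> 0" using assms by simp
  finally show ?thesis using \<open>a > 0\<close> by (simp add: zero_le_mult_iff)
qed

lemma entries_imp_psd2:
  assumes car: "A \<in> carrier_mat 2 2" and A10: "A$$(1,0) = cnj (A$$(0,1))"
    and im: "Im (A$$(0,0)) = 0" "Im (A$$(1,1)) = 0"
    and nonneg: "Re (A$$(0,0)) \<ge> 0" "Re (A$$(1,1)) \<ge> 0"
    and det: "(cmod (A$$(0,1)))\<^sup>2 \<le> Re (A$$(0,0)) * Re (A$$(1,1))"
  shows "psd2 A"
proof -
  define a d b where "a = Re (A$$(0,0))" and "d = Re (A$$(1,1))" and "b = A$$(0,1)"
  have A00: "A$$(0,0) = of_real a" and A11: "A$$(1,1) = of_real d"
    using im unfolding a_def d_def by (simp_all add: complex_eq_iff)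
  have "Re (qform2 A v) \<ge> 0" for v
  proof -
    have "- Re (cnj (v 0) * b * v 1) \<le> cmod b * cmod (v 0) * cmod (v 1)"
      using abs_Re_le_cmod[of "cnj (v 0) * b * v 1"] by (simp add: norm_mult mult_ac)
    moreover have "2 * cmod b * cmod (v 0) * cmod (v 1) \<le> a * (cmod (v 0))\<^sup>2 + d * (cmod (v 1))\<^sup>2"
      using real_quadratic_form_nonneg nonneg det unfolding a_def d_def b_def by simp
    ultimately show ?thesis using qform2_hermitian[OF A00 A11 A10, of v] b_def by simp
  qed
  moreover have "Im (qform2 A v) = 0" for v using qform2_hermitian[OF A00 A11 A10, of v] by simp
  moreover have "adj2 A = A" using hermitian2_iff[OF car] A10 im by simp
  ultimately show ?thesis using car unfolding psd2_qform2 by blast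
qed

lemma psd2_iff: "psd2 A \<longleftrightarrow> A \<in> carrier_mat 2 2 \<and> A$$(1,0) = cnj (A$$(0,1)) \<and>
   Im (A$$(0,0)) = 0 \<and> Im (A$$(1,1)) = 0 \<and> Re (A$$(0,0)) \<ge> 0 \<and> Re (A$$(1,1)) \<ge> 0 \<and>
   (cmod (A$$(0,1)))\<^sup>2 \<le> Re (A$$(0,0)) * Re (A$$(1,1))"
  using psd2_imp_entries entries_imp_psd2 psd2_qform2 by blast

text \<open>A basis of M_2(C) consisting of positive semidefinite matrices: the diagonal units,
  the all-ones matrix and [[1, -i], [i, 1]], with the coordinate functionals below.\<close>
definition ones2 :: "complex mat" where "ones2 = mat 2 2 (\<lambda>_. 1)"
definition ikmat2 :: "complex mat" where
  "ikmat2 = mat 2 2 (\<lambda>(i,j). if i = j then 1 else if i = 0 then - \<i> else \<i>)"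

definition coord_J :: "complex mat \<Rightarrow> complex" where "coord_J X = (X$$(0,1) + X$$(1,0)) / 2"
definition coord_K :: "complex mat \<Rightarrow> complex" where "coord_K X = \<i> * (X$$(0,1) - X$$(1,0)) / 2"
definition coord_E0 :: "complex mat \<Rightarrow> complex" where "coord_E0 X = X$$(0,0) - coord_J X - coord_K X"
definition coord_E3 :: "complex mat \<Rightarrow> complex" where "coord_E3 X = X$$(1,1) - coord_J X - coord_K X"

lemma basis_carrier [simp]: "munit2 l \<in> carrier_mat 2 2" "ones2 \<in> carrier_mat 2 2" "ikmat2 \<in> carrier_mat 2 2"
  by (auto simp: munit2_def ones2_def ikmat2_def)

lemma basis_psd: "psd2 (munit2 0)" "psd2 (munit2 3)" "psd2 ones2" "psd2 ikmat2"
  by (auto simp: psd2_iff munit2_def ones2_def ikmat2_def)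

lemma basis_trace: "tr2 (munit2 0) = 1" "tr2 (munit2 3) = 1" "tr2 ones2 = 2" "tr2 ikmat2 = 2"
  by (auto simp: tr2_def munit2_def ones2_def ikmat2_def)

lemma psd_basis_decomp:
  assumes "X \<in> carrier_mat 2 2"
  shows "X = coord_E0 X \<cdot>\<^sub>m munit2 0 + coord_E3 X \<cdot>\<^sub>m munit2 3 + coord_J X \<cdot>\<^sub>m ones2 + coord_K X \<cdot>\<^sub>m ikmat2"
  by (rule eq_matI) (use assms in \<open>auto simp: less_2_iff munit2_def ones2_def ikmat2_def
      coord_E0_def coord_E3_def coord_J_def coord_K_def field_simps\<close>)

lemma linear_M2_carrier: "linear_M2 F \<Longrightarrow> X \<in> carrier_mat 2 2 \<Longrightarrow> F X \<in> carrier_mat 2 2"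
  unfolding linear_M2_def by auto

lemma linear_M2_comb4:
  assumes "linear_M2 F" "A \<in> carrier_mat 2 2" "B \<in> carrier_mat 2 2" "C \<in> carrier_mat 2 2" "D \<in> carrier_mat 2 2"
  shows "F (a \<cdot>\<^sub>m A + b \<cdot>\<^sub>m B + c \<cdot>\<^sub>m C + d \<cdot>\<^sub>m D) = a \<cdot>\<^sub>m F A + b \<cdot>\<^sub>m F B + c \<cdot>\<^sub>m F C + d \<cdot>\<^sub>m F D"
  using assms unfolding linear_M2_def by simp

lemma adj2_comb4:
  assumes "A \<in> carrier_mat 2 2" "B \<in> carrier_mat 2 2" "C \<in> carrier_mat 2 2" "D \<in> carrier_mat 2 2"
  shows "adj2 (a \<cdot>\<^sub>m A + b \<cdot>\<^sub>m B + c \<cdot>\<^sub>m C + d \<cdot>\<^sub>m D)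
       = cnj a \<cdot>\<^sub>m adj2 A + cnj b \<cdot>\<^sub>m adj2 B + cnj c \<cdot>\<^sub>m adj2 C + cnj d \<cdot>\<^sub>m adj2 D"
  by (rule eq_matI) (use assms in \<open>auto simp: adj2_def less_2_iff\<close>)

lemma psd2_adj2: "psd2 M \<Longrightarrow> adj2 M = M"
  unfolding psd2_def by auto

text \<open>Positive maps commute with the adjoint: expand X in the PSD basis, whose elements
  are self-adjoint and are mapped to self-adjoint matrices.\<close>
lemma positive_commutes_adj2:
  assumes lin: "linear_M2 T" and pos: "positive_M2 T" and X: "X \<in> carrier_mat 2 2"
  shows "T (adj2 X) = adj2 (T X)"
proof -
  have herm: "adj2 (T P) = T P" and car: "T P \<in> carrier_mat 2 2" if "psd2 P" for P
    using pos that unfolding positive_M2_def psd2_def by auto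
  note basis = basis_psd basis_psd[THEN psd2_adj2]
  have "T (adj2 X) = T (cnj (coord_E0 X) \<cdot>\<^sub>m munit2 0 + cnj (coord_E3 X) \<cdot>\<^sub>m munit2 3
                       + cnj (coord_J X) \<cdot>\<^sub>m ones2 + cnj (coord_K X) \<cdot>\<^sub>m ikmat2)"
    by (subst psd_basis_decomp[OF X], subst adj2_comb4) (auto simp: basis)
  also have "\<dots> = cnj (coord_E0 X) \<cdot>\<^sub>m T (munit2 0) + cnj (coord_E3 X) \<cdot>\<^sub>m T (munit2 3)
                   + cnj (coord_J X) \<cdot>\<^sub>m T ones2 + cnj (coord_K X) \<cdot>\<^sub>m T ikmat2"
    by (rule linear_M2_comb4[OF lin]) auto
  also have "\<dots> = adj2 (coord_E0 X \<cdot>\<^sub>m T (munit2 0) + coord_E3 X \<cdot>\<^sub>m T (munit2 3)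
                   + coord_J X \<cdot>\<^sub>m T ones2 + coord_K X \<cdot>\<^sub>m T ikmat2)"
    by (subst adj2_comb4) (auto simp: car herm basis)
  also have "coord_E0 X \<cdot>\<^sub>m T (munit2 0) + coord_E3 X \<cdot>\<^sub>m T (munit2 3)
               + coord_J X \<cdot>\<^sub>m T ones2 + coord_K X \<cdot>\<^sub>m T ikmat2 = T X"
    by (subst (2) psd_basis_decomp[OF X], rule linear_M2_comb4[OF lin, symmetric]) auto
  finally show ?thesis .
qed

lemma linear_M2_funpow: "linear_M2 T \<Longrightarrow> linear_M2 (T ^^ n)"
  by (induction n) (auto simp: linear_M2_def)

lemma positive_M2_funpow: "positive_M2 T \<Longrightarrow> positive_M2 (T ^^ n)"
  by (induction n) (auto simp: positive_M2_def)

lemma trace_preserving_M2_funpow: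
  "linear_M2 T \<Longrightarrow> trace_preserving_M2 T \<Longrightarrow> trace_preserving_M2 (T ^^ n)"
  by (induction n) (auto simp: trace_preserving_M2_def linear_M2_carrier linear_M2_funpow)

lemma psd2_entry_le_trace:
  assumes "psd2 M" "i < 2" "j < 2"
  shows "cmod (M$$(i,j)) \<le> Re (tr2 M)"
proof -
  define a d where "a = Re (M$$(0,0))" and "d = Re (M$$(1,1))"
  have h: "M$$(1,0) = cnj (M$$(0,1))" "Im (M$$(0,0)) = 0" "Im (M$$(1,1)) = 0"
    "a \<ge> 0" "d \<ge> 0" "(cmod (M$$(0,1)))\<^sup>2 \<le> a * d"
    using assms(1) unfolding psd2_iff a_def d_def by auto
  have "a * d \<le> (a + d)\<^sup>2"
    using h(4,5) by (simp add: power2_eq_square algebra_simps)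
  hence "(cmod (M$$(0,1)))\<^sup>2 \<le> (a + d)\<^sup>2"
    using h(6) by linarith
  hence off: "cmod (M$$(0,1)) \<le> a + d" "cmod (M$$(1,0)) \<le> a + d"
    using h(1,4,5) by (auto intro: power2_le_imp_le)
  have diag: "cmod (M$$(0,0)) \<le> a + d" "cmod (M$$(1,1)) \<le> a + d"
    using h(2-5) unfolding a_def d_def by (simp_all add: cmod_def)
  have "Re (tr2 M) = a + d"
    unfolding tr2_def a_def d_def by simp
  with off diag assms(2,3) show ?thesis
    unfolding less_2_iff by auto
qed

text \<open>The weight of X in the PSD basis, counting each basis element with its trace.\<close>
definition psd_weight :: "complex mat \<Rightarrow> real" where
  "psd_weight X = cmod (coord_E0 X) + cmod (coord_E3 X) + 2 * cmod (coord_J X) + 2 * cmod (coord_K X)"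

lemma norm_triangle_4: "cmod (a + b + c + d) \<le> cmod a + cmod b + cmod c + cmod d"
proof -
  have "cmod (a + b + c + d) \<le> cmod (a + b + c) + cmod d" "cmod (a + b + c) \<le> cmod (a + b) + cmod c"
    "cmod (a + b) \<le> cmod a + cmod b" by (rule norm_triangle_ineq)+
  thus ?thesis by linarith
qed

lemma ptp_entry_bound:
  assumes lin: "linear_M2 S" and pos: "positive_M2 S" and tp: "trace_preserving_M2 S"
    and X: "X \<in> carrier_mat 2 2" and ij: "i < 2" "j < 2"
  shows "cmod (S X $$ (i,j)) \<le> psd_weight X"
proof -
  have car: "S P \<in> carrier_mat 2 2" and bound: "cmod (S P $$ (i,j)) \<le> Re (tr2 P)" if "psd2 P" for P
    using pos that psd2_entry_le_trace[OF _ ij, of "S P"] tp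
    unfolding positive_M2_def trace_preserving_M2_def psd2_def by auto
  have "S X = coord_E0 X \<cdot>\<^sub>m S (munit2 0) + coord_E3 X \<cdot>\<^sub>m S (munit2 3)
               + coord_J X \<cdot>\<^sub>m S ones2 + coord_K X \<cdot>\<^sub>m S ikmat2"
    by (subst psd_basis_decomp[OF X], rule linear_M2_comb4[OF lin]) auto
  hence "S X $$ (i,j) = coord_E0 X * S (munit2 0) $$ (i,j) + coord_E3 X * S (munit2 3) $$ (i,j)
                        + coord_J X * S ones2 $$ (i,j) + coord_K X * S ikmat2 $$ (i,j)"
    using car[OF basis_psd(1)] car[OF basis_psd(2)] car[OF basis_psd(3)] car[OF basis_psd(4)] ij by simp
  also have "cmod \<dots> \<le> cmod (coord_E0 X) * cmod (S (munit2 0) $$ (i,j)) + cmod (coord_E3 X) * cmod (S (munit2 3) $$ (i,j))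
                      + cmod (coord_J X) * cmod (S ones2 $$ (i,j)) + cmod (coord_K X) * cmod (S ikmat2 $$ (i,j))"
    by (rule order_trans[OF norm_triangle_4]) (simp add: norm_mult)
  also have "\<dots> \<le> cmod (coord_E0 X) * 1 + cmod (coord_E3 X) * 1 + cmod (coord_J X) * 2 + cmod (coord_K X) * 2"
    using bound[OF basis_psd(1)] bound[OF basis_psd(2)] bound[OF basis_psd(3)] bound[OF basis_psd(4)]
    by (intro add_mono mult_left_mono) (simp_all add: basis_trace)
  also have "\<dots> = psd_weight X" by (simp add: psd_weight_def)
  finally show ?thesis .
qed

text \<open>Eigenvalues of a positive trace-preserving map lie in the closed unit disc: the iterates
  multiply a nonzero entry of an eigenmatrix by z^n, while all entries stay bounded.\<close>
lemma ptp_eigenvalue_bound: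
  assumes lin: "linear_M2 T" and pos: "positive_M2 T" and tp: "trace_preserving_M2 T"
    and X: "X \<in> carrier_mat 2 2" and eig: "T X = z \<cdot>\<^sub>m X"
    and ij: "i < 2" "j < 2" and nz: "X$$(i,j) \<noteq> 0"
  shows "cmod z \<le> 1"
proof (rule ccontr)
  assume "\<not> cmod z \<le> 1"
  then obtain n where "psd_weight X / cmod (X$$(i,j)) < cmod z ^ n"
    using real_arch_pow by (metis not_le)
  hence big: "psd_weight X < cmod (z ^ n * X$$(i,j))"
    using nz by (simp add: divide_simps norm_mult norm_power)
  have "(T ^^ n) X = z ^ n \<cdot>\<^sub>m X"
  proof (induction n)
    case (Suc n)
    have "(T ^^ Suc n) X = z ^ n \<cdot>\<^sub>m T X"
      using Suc lin X unfolding linear_M2_def by simp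
    also have "\<dots> = z ^ Suc n \<cdot>\<^sub>m X"
      unfolding eig by (rule eq_matI) auto
    finally show ?case .
  qed (rule eq_matI, use X in auto)
  hence "(T ^^ n) X $$ (i,j) = z ^ n * X$$(i,j)" using X ij by simp
  with ptp_entry_bound[OF linear_M2_funpow[OF lin] positive_M2_funpow[OF pos]
      trace_preserving_M2_funpow[OF lin tp] X ij, of n] big
  show False by simp
qed

definition mat2_to_vec :: "complex mat \<Rightarrow> complex vec" where
  "mat2_to_vec X = vec 4 (\<lambda>l. X $$ (l div 2, l mod 2))"

definition vec_to_mat2 :: "complex vec \<Rightarrow> complex mat" where
  "vec_to_mat2 v = mat 2 2 (\<lambda>(i,j). v $ (2 * i + j))"

lemma sum_upto_4: "(\<Sum>l\<in>{0..<4}. f l) = f 0 + f 1 + f 2 + f (3::nat)"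
  by (simp add: eval_nat_numeral atLeast0LessThan)

lemma op_mat_carrier [simp]: "op_mat T \<in> carrier_mat 4 4"
  and op_mat_dim [simp]: "dim_row (op_mat T) = 4" "dim_col (op_mat T) = 4"
  by (simp_all add: op_mat_def)

lemma vec_to_mat2_carrier [simp]: "vec_to_mat2 v \<in> carrier_mat 2 2"
  by (simp add: vec_to_mat2_def)

lemma op_mat_index: "k < 4 \<Longrightarrow> l < 4 \<Longrightarrow> op_mat T $$ (k,l) = T (munit2 l) $$ (k div 2, k mod 2)"
  by (simp add: op_mat_def)

lemma munit2_decomp:
  assumes "X \<in> carrier_mat 2 2"
  shows "X = X$$(0,0) \<cdot>\<^sub>m munit2 0 + X$$(0,1) \<cdot>\<^sub>m munit2 1 + X$$(1,0) \<cdot>\<^sub>m munit2 2 + X$$(1,1) \<cdot>\<^sub>m munit2 3"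
  by (rule eq_matI) (use assms in \<open>auto simp: less_2_iff munit2_def\<close>)

lemma op_mat_represents:
  assumes lin: "linear_M2 T" and X: "X \<in> carrier_mat 2 2" and k: "k < 4"
  shows "(op_mat T *\<^sub>v mat2_to_vec X) $ k = T X $$ (k div 2, k mod 2)"
proof -
  have car: "T (munit2 l) \<in> carrier_mat 2 2" for l
    using linear_M2_carrier[OF lin] by simp
  have "T X = X$$(0,0) \<cdot>\<^sub>m T (munit2 0) + X$$(0,1) \<cdot>\<^sub>m T (munit2 1)
              + X$$(1,0) \<cdot>\<^sub>m T (munit2 2) + X$$(1,1) \<cdot>\<^sub>m T (munit2 3)"
    by (subst munit2_decomp[OF X], rule linear_M2_comb4[OF lin]) auto
  hence "T X $$ (k div 2, k mod 2) = X$$(0,0) * T (munit2 0) $$ (k div 2, k mod 2)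
      + X$$(0,1) * T (munit2 1) $$ (k div 2, k mod 2) + X$$(1,0) * T (munit2 2) $$ (k div 2, k mod 2)
      + X$$(1,1) * T (munit2 3) $$ (k div 2, k mod 2)"
    using car[of 0] car[of 1] car[of 2] car[of 3] k by simp
  moreover have "(op_mat T *\<^sub>v mat2_to_vec X) $ k = (\<Sum>l\<in>{0..<4}. T (munit2 l) $$ (k div 2, k mod 2) * X $$ (l div 2, l mod 2))"
    using k by (simp add: scalar_prod_def mat2_to_vec_def op_mat_index)
  ultimately show ?thesis
    by (simp add: sum_upto_4 mult.commute)
qed

lemma char_poly_op_mat_nonzero: "char_poly (op_mat T) \<noteq> 0"
proof -
  have "coeff (char_poly (op_mat T)) 4 = 1"
    using degree_monic_char_poly[OF op_mat_carrier] by blast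
  thus ?thesis by auto
qed

lemma mem_spec_M2_iff: "z \<in># spec_M2 T \<longleftrightarrow> poly (char_poly (op_mat T)) z = 0"
  unfolding spec_M2_def using char_poly_op_mat_nonzero by simp

lemma mem_spec_M2_eigenvalue: "z \<in># spec_M2 T \<longleftrightarrow> eigenvalue (op_mat T) z"
  unfolding mem_spec_M2_iff using eigenvalue_root_char_poly[OF op_mat_carrier] by simp

definition trace_vec :: "complex vec" where
  "trace_vec = vec 4 (\<lambda>k. if k = 0 \<or> k = 3 then 1 else 0)"

lemma tr2_munit2:
  assumes "l < 4" shows "tr2 (munit2 l) = trace_vec $ l"
proof -
  have "l = 0 \<or> l = 1 \<or> l = 2 \<or> l = 3" using assms less_4_iff by blast
  thus ?thesis by (elim disjE) (simp_all add: tr2_def munit2_def trace_vec_def)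
qed

lemma trace_vec_left_eigenvector:
  assumes tp: "trace_preserving_M2 T"
  shows "transpose_mat (op_mat T) *\<^sub>v trace_vec = trace_vec"
proof (rule eq_vecI)
  fix l assume "l < dim_vec trace_vec"
  hence l: "l < 4" by (simp add: trace_vec_def)
  have "(transpose_mat (op_mat T) *\<^sub>v trace_vec) $ l = op_mat T $$ (0,l) + op_mat T $$ (3,l)"
    using l by (simp add: scalar_prod_def sum_upto_4 trace_vec_def)
  also have "\<dots> = tr2 (T (munit2 l))"
    using l by (simp add: op_mat_index tr2_def)
  also have "\<dots> = trace_vec $ l"
    using tp l tr2_munit2 unfolding trace_preserving_M2_def by simp
  finally show "(transpose_mat (op_mat T) *\<^sub>v trace_vec) $ l = trace_vec $ l" .
qed (simp add: trace_vec_def)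

text \<open>1 is an eigenvalue of every trace-preserving map, since op_mat T and its transpose share the characteristic polynomial.\<close>
lemma one_mem_spec_M2:
  assumes "trace_preserving_M2 T"
  shows "1 \<in># spec_M2 T"
proof -
  have "trace_vec \<noteq> 0\<^sub>v 4"
  proof
    assume "trace_vec = 0\<^sub>v 4"
    hence "trace_vec $ 0 = 0\<^sub>v 4 $ 0" by simp
    thus False by (simp add: trace_vec_def)
  qed
  hence "eigenvector (transpose_mat (op_mat T)) trace_vec 1"
    using trace_vec_left_eigenvector[OF assms] unfolding eigenvector_def by (simp add: trace_vec_def)
  hence "poly (char_poly (transpose_mat (op_mat T))) 1 = 0"
    using eigenvalue_root_char_poly[of "transpose_mat (op_mat T)" 4] unfolding eigenvalue_def by auto
  thus ?thesis
    unfolding mem_spec_M2_iff using char_poly_transpose_mat[OF op_mat_carrier] by simp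
qed

lemma eigenvector_op_mat_eigenmatrix:
  assumes lin: "linear_M2 T" and v: "v \<in> carrier_vec 4" and ev: "op_mat T *\<^sub>v v = z \<cdot>\<^sub>v v"
  shows "T (vec_to_mat2 v) = z \<cdot>\<^sub>m vec_to_mat2 v"
proof (rule eq_matI)
  fix i j assume "i < dim_row (z \<cdot>\<^sub>m vec_to_mat2 v)" "j < dim_col (z \<cdot>\<^sub>m vec_to_mat2 v)"
  hence ij: "i < 2" "j < 2" by (auto simp: vec_to_mat2_def)
  have coords: "mat2_to_vec (vec_to_mat2 v) = v"
    by (rule eq_vecI) (use v in \<open>auto simp: mat2_to_vec_def vec_to_mat2_def\<close>)
  have k: "2 * i + j < 4" "(2 * i + j) div 2 = i" "(2 * i + j) mod 2 = j" using ij by auto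
  have "T (vec_to_mat2 v) $$ (i,j) = (op_mat T *\<^sub>v v) $ (2 * i + j)"
    using op_mat_represents[OF lin _ k(1), of "vec_to_mat2 v"] unfolding coords k(2,3)
    by (simp add: vec_to_mat2_def)
  also have "\<dots> = (z \<cdot>\<^sub>m vec_to_mat2 v) $$ (i,j)"
    using ev v ij k(1) by (simp add: vec_to_mat2_def)
  finally show "T (vec_to_mat2 v) $$ (i,j) = (z \<cdot>\<^sub>m vec_to_mat2 v) $$ (i,j)" .
qed (use carrier_matD[OF linear_M2_carrier[OF lin vec_to_mat2_carrier]]
        carrier_matD[OF vec_to_mat2_carrier] in auto)

lemma spec_M2_unit_disc:
  assumes lin: "linear_M2 T" and pos: "positive_M2 T" and tp: "trace_preserving_M2 T"
    and z: "z \<in># spec_M2 T"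
  shows "cmod z \<le> 1"
proof -
  obtain v where "eigenvector (op_mat T) v z"
    using z unfolding mem_spec_M2_eigenvalue eigenvalue_def by blast
  hence v: "v \<in> carrier_vec 4" and nz: "v \<noteq> 0\<^sub>v 4" and ev: "op_mat T *\<^sub>v v = z \<cdot>\<^sub>v v"
    unfolding eigenvector_def by auto
  obtain l where l: "l < 4" and vl: "v $ l \<noteq> 0"
  proof (rule ccontr)
    assume "\<not> thesis"
    hence "\<And>l. l < 4 \<Longrightarrow> v $ l = 0" using that by blast
    hence "v = 0\<^sub>v 4" using v by (intro eq_vecI) auto
    with nz show False by simp
  qed
  have ij: "l div 2 < 2" "l mod 2 < 2" using l by auto
  have "vec_to_mat2 v $$ (l div 2, l mod 2) = v $ l"
    using ij by (simp add: vec_to_mat2_def)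
  with vl show ?thesis
    by (intro ptp_eigenvalue_bound[OF lin pos tp vec_to_mat2_carrier
          eigenvector_op_mat_eigenmatrix[OF lin v ev] ij]) simp
qed

text \<open>Transposition of matrix units permutes their indices by 0 1 2 3 |-> 0 2 1 3; the
  corresponding permutation matrix conjugates op_mat T into its entrywise conjugate.\<close>
definition swap_index :: "nat \<Rightarrow> nat" where
  "swap_index k = (if k = 1 then 2 else if k = 2 then 1 else k)"

definition swap_mat :: "complex mat" where
  "swap_mat = mat 4 4 (\<lambda>(i,j). if j = swap_index i then 1 else 0)"

lemma swap_index_props:
  assumes "k < 4"
  shows "swap_index k mod 2 = k div 2" "swap_index k div 2 = k mod 2" "swap_index k < 4"
proof -
  have "k = 0 \<or> k = 1 \<or> k = 2 \<or> k = 3" using assms less_4_iff by blast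
  thus "swap_index k mod 2 = k div 2" "swap_index k div 2 = k mod 2" "swap_index k < 4"
    by (elim disjE; simp add: swap_index_def)+
qed

lemma swap_index_involution: "swap_index (swap_index k) = k"
  by (simp add: swap_index_def)

lemma munit2_swap_index: "l < 4 \<Longrightarrow> munit2 (swap_index l) = adj2 (munit2 l)"
  by (rule eq_matI) (auto simp: munit2_def adj2_def swap_index_props)

text \<open>Since T commutes with the adjoint, exchanging the roles of E_01 and E_10 conjugates the entries of op_mat T.\<close>
lemma op_mat_swap_index:
  assumes lin: "linear_M2 T" and pos: "positive_M2 T" and k: "k < 4" and l: "l < 4"
  shows "op_mat T $$ (swap_index k, swap_index l) = cnj (op_mat T $$ (k,l))"
proof -
  have sk: "swap_index k < 4" "swap_index l < 4" using k l by (auto simp: swap_index_props)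
  have "op_mat T $$ (swap_index k, swap_index l)
      = T (munit2 (swap_index l)) $$ (swap_index k div 2, swap_index k mod 2)"
    using sk by (simp add: op_mat_index)
  also have "T (munit2 (swap_index l)) = adj2 (T (munit2 l))"
    unfolding munit2_swap_index[OF l] by (rule positive_commutes_adj2[OF lin pos]) simp
  finally show ?thesis
    using k l sk by (simp add: op_mat_index adj2_def swap_index_props)
qed

lemma swap_mat_carrier [simp]: "swap_mat \<in> carrier_mat 4 4"
  and swap_mat_dim [simp]: "dim_row swap_mat = 4" "dim_col swap_mat = 4"
  by (simp_all add: swap_mat_def)

lemma swap_mat_index: "i < 4 \<Longrightarrow> j < 4 \<Longrightarrow> swap_mat $$ (i,j) = (if j = swap_index i then 1 else 0)"
  by (simp add: swap_mat_def)

lemma swap_mat_mult_left: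
  assumes A: "A \<in> carrier_mat 4 4" and k: "k < 4" and m: "m < 4"
  shows "(swap_mat * A) $$ (k,m) = A $$ (swap_index k, m)"
proof -
  have "(swap_mat * A) $$ (k,m) = (\<Sum>i\<in>{0..<4}. swap_mat $$ (k,i) * A $$ (i,m))"
    using A k m by (simp add: scalar_prod_def)
  also have "\<dots> = A $$ (swap_index k, m)"
    using k unfolding sum_upto_4 less_4_iff by (elim disjE) (simp_all add: swap_mat_index swap_index_def)
  finally show ?thesis .
qed

lemma swap_mat_mult_right:
  assumes A: "A \<in> carrier_mat 4 4" and k: "k < 4" and m: "m < 4"
  shows "(A * swap_mat) $$ (k,m) = A $$ (k, swap_index m)"
proof -
  have "(A * swap_mat) $$ (k,m) = (\<Sum>i\<in>{0..<4}. A $$ (k,i) * swap_mat $$ (i,m))"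
    using A k m by (simp add: scalar_prod_def)
  also have "\<dots> = A $$ (k, swap_index m)"
    using m unfolding sum_upto_4 less_4_iff by (elim disjE) (simp_all add: swap_mat_index swap_index_def)
  finally show ?thesis .
qed

lemma swap_mat_involution: "swap_mat * swap_mat = 1\<^sub>m 4"
proof (rule eq_matI)
  fix i j assume "i < dim_row (1\<^sub>m 4 :: complex mat)" "j < dim_col (1\<^sub>m 4 :: complex mat)"
  hence i: "i < 4" and j: "j < 4" by auto
  have "(swap_mat * swap_mat) $$ (i,j) = swap_mat $$ (swap_index i, j)"
    by (rule swap_mat_mult_left[OF swap_mat_carrier i j])
  thus "(swap_mat * swap_mat) $$ (i,j) = 1\<^sub>m 4 $$ (i,j)"
    using i j swap_index_props(3)[OF i] by (auto simp: swap_mat_index swap_index_involution)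
qed auto

lemma op_mat_conj_similar:
  assumes lin: "linear_M2 T" and pos: "positive_M2 T"
  shows "similar_mat (map_mat cnj (op_mat T)) (op_mat T)"
proof -
  have conj: "map_mat cnj (op_mat T) = swap_mat * op_mat T * swap_mat"
  proof (rule eq_matI)
    fix k l assume "k < dim_row (swap_mat * op_mat T * swap_mat)" "l < dim_col (swap_mat * op_mat T * swap_mat)"
    hence k: "k < 4" and l: "l < 4" by (auto simp: swap_mat_def)
    have "(swap_mat * op_mat T * swap_mat) $$ (k,l) = (swap_mat * op_mat T) $$ (k, swap_index l)"
      by (rule swap_mat_mult_right[OF mult_carrier_mat[OF swap_mat_carrier op_mat_carrier] k l])
    also have "\<dots> = op_mat T $$ (swap_index k, swap_index l)"
      by (rule swap_mat_mult_left[OF _ k swap_index_props(3)[OF l]]) simp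
    also have "\<dots> = cnj (op_mat T $$ (k,l))" by (rule op_mat_swap_index[OF lin pos k l])
    finally show "map_mat cnj (op_mat T) $$ (k,l) = (swap_mat * op_mat T * swap_mat) $$ (k,l)"
      using k l by simp
  qed (auto simp: swap_mat_def)
  show ?thesis
    by (rule similar_matI[of _ _ swap_mat swap_mat 4]) (auto simp: conj swap_mat_involution)
qed

lemma proots_linear_factors: "proots (\<Prod>a\<leftarrow>as. [:-a, 1:]) = mset (as :: complex list)"
proof (induction as)
  case (Cons a as)
  have "(\<Prod>a\<leftarrow>as. [:-a, 1:]) \<noteq> 0" by (auto simp: prod_list_zero_iff)
  hence "proots ([:-a, 1:] * (\<Prod>a\<leftarrow>as. [:-a, 1:])) = proots [:-a, 1:] + proots (\<Prod>a\<leftarrow>as. [:-a, 1:])"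
    by (intro proots_mult) simp_all
  thus ?case using Cons by simp
qed simp

lemma map_poly_cnj_linear_factors:
  "map_poly cnj (\<Prod>a\<leftarrow>as. [:-a, 1:]) = (\<Prod>a\<leftarrow>as. [:- cnj a, 1:])"
proof -
  interpret cnj_hom: map_poly_comm_ring_hom cnj by unfold_locales auto
  show ?thesis
  proof (induction as)
    case (Cons a as)
    have "map_poly cnj (\<Prod>a\<leftarrow>a # as. [:-a, 1:]) = map_poly cnj [:-a, 1:] * map_poly cnj (\<Prod>a\<leftarrow>as. [:-a, 1:])"
      by (simp only: list.map prod_list.Cons cnj_hom.hom_mult)
    thus ?case using Cons by simp
  qed simp
qed

lemma char_poly_roots_conj_invariant:
  fixes A :: "complex mat"
  assumes A: "A \<in> carrier_mat n n" and sim: "similar_mat (map_mat cnj A) A"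
  shows "image_mset cnj (proots (char_poly A)) = proots (char_poly A)"
proof -
  interpret cnj_hom: comm_ring_hom cnj by unfold_locales auto
  obtain as where as: "char_poly A = (\<Prod>a\<leftarrow>as. [:-a, 1:])"
    using char_poly_factorized[OF A] by blast
  have "map_poly cnj (char_poly A) = char_poly A"
    using cnj_hom.char_poly_hom[OF A] char_poly_similar[OF sim] by simp
  hence "mset (map cnj as) = mset as"
    unfolding as map_poly_cnj_linear_factors
    by (metis (no_types, lifting) map_eq_conv proots_linear_factors list.map_comp o_apply)
  thus ?thesis unfolding as proots_linear_factors by simp
qed

lemma spec_M2_conj_invariant:
  assumes "linear_M2 T" "positive_M2 T"
  shows "image_mset cnj (spec_M2 T) = spec_M2 T"
  unfolding spec_M2_def
  by (rule char_poly_roots_conj_invariant[OF op_mat_carrier op_mat_conj_similar[OF assms]])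

lemma det_expand_row0:
  assumes "(A :: 'a :: comm_ring_1 mat) \<in> carrier_mat (Suc n) (Suc n)"
  shows "det A = (\<Sum>j<Suc n. A $$ (0,j) * ((-1)^j * det (mat_delete A 0 j)))"
  using laplace_expansion_row[OF assms, of 0] unfolding cofactor_def by simp

lemma det_1x1: assumes "(A :: 'a :: comm_ring_1 mat) \<in> carrier_mat 1 1" shows "det A = A $$ (0,0)"
  using det_expand_row0[of A 0] mat_delete_carrier[OF assms] assms by simp

lemma det_2x2:
  assumes "(A :: 'a :: comm_ring_1 mat) \<in> carrier_mat 2 2"
  shows "det A = A $$ (0,0) * A $$ (1,1) - A $$ (0,1) * A $$ (1,0)"
proof -
  have A: "A \<in> carrier_mat (Suc 1) (Suc 1)" using assms by (simp add: numeral_2_eq_2)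
  have c: "\<And>j. mat_delete A 0 j \<in> carrier_mat 1 1" using mat_delete_carrier[OF assms] by simp
  show ?thesis unfolding det_expand_row0[OF A] det_1x1[OF c] using assms
    by (simp add: mat_delete_def)
qed

lemma det_3x3:
  assumes "(A :: 'a :: comm_ring_1 mat) \<in> carrier_mat 3 3"
  shows "det A = A $$ (0,0) * (A $$ (1,1) * A $$ (2,2) - A $$ (1,2) * A $$ (2,1))
               - A $$ (0,1) * (A $$ (1,0) * A $$ (2,2) - A $$ (1,2) * A $$ (2,0))
               + A $$ (0,2) * (A $$ (1,0) * A $$ (2,1) - A $$ (1,1) * A $$ (2,0))"
proof -
  have A: "A \<in> carrier_mat (Suc 2) (Suc 2)" using assms by (simp add: numeral_3_eq_3)
  have c: "\<And>j. mat_delete A 0 j \<in> carrier_mat 2 2" using mat_delete_carrier[OF assms] by simp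
  show ?thesis unfolding det_expand_row0[OF A] det_2x2[OF c] using assms
    by (simp add: mat_delete_def algebra_simps eval_nat_numeral)
qed

lemma det_4x4:
  assumes "(A :: 'a :: comm_ring_1 mat) \<in> carrier_mat 4 4"
  shows "det A =
   A$$(0,0) * (A$$(1,1) * (A$$(2,2) * A$$(3,3) - A$$(2,3) * A$$(3,2)) - A$$(1,2) * (A$$(2,1) * A$$(3,3) - A$$(2,3) * A$$(3,1)) + A$$(1,3) * (A$$(2,1) * A$$(3,2) - A$$(2,2) * A$$(3,1)))
 - A$$(0,1) * (A$$(1,0) * (A$$(2,2) * A$$(3,3) - A$$(2,3) * A$$(3,2)) - A$$(1,2) * (A$$(2,0) * A$$(3,3) - A$$(2,3) * A$$(3,0)) + A$$(1,3) * (A$$(2,0) * A$$(3,2) - A$$(2,2) * A$$(3,0)))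
 + A$$(0,2) * (A$$(1,0) * (A$$(2,1) * A$$(3,3) - A$$(2,3) * A$$(3,1)) - A$$(1,1) * (A$$(2,0) * A$$(3,3) - A$$(2,3) * A$$(3,0)) + A$$(1,3) * (A$$(2,0) * A$$(3,1) - A$$(2,1) * A$$(3,0)))
 - A$$(0,3) * (A$$(1,0) * (A$$(2,1) * A$$(3,2) - A$$(2,2) * A$$(3,1)) - A$$(1,1) * (A$$(2,0) * A$$(3,2) - A$$(2,2) * A$$(3,0)) + A$$(1,2) * (A$$(2,0) * A$$(3,1) - A$$(2,1) * A$$(3,0)))"
proof -
  have A: "A \<in> carrier_mat (Suc 3) (Suc 3)" using assms by (simp add: eval_nat_numeral)
  have c: "\<And>j. mat_delete A 0 j \<in> carrier_mat 3 3" using mat_delete_carrier[OF assms] by simp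
  show ?thesis unfolding det_expand_row0[OF A] det_3x3[OF c] using assms
    by (simp add: mat_delete_def eval_nat_numeral algebra_simps)
qed

definition model_map :: "complex \<Rightarrow> complex \<Rightarrow> complex \<Rightarrow> complex mat \<Rightarrow> complex mat" where
  "model_map \<alpha> u w X = mat 2 2 (\<lambda>(i,j).
      if i = 0 \<and> j = 0 then \<alpha> * X$$(0,0) + (1-\<alpha>) * X$$(1,1)
      else if i = 0 then u * X$$(0,1) + cnj w * X$$(1,0)
      else if j = 0 then w * X$$(0,1) + cnj u * X$$(1,0)
      else (1-\<alpha>) * X$$(0,0) + \<alpha> * X$$(1,1))"

lemma model_map_carrier [simp]: "model_map \<alpha> u w X \<in> carrier_mat 2 2"
  by (simp add: model_map_def)

lemma model_map_index:
  "model_map \<alpha> u w X $$ (0,0) = \<alpha> * X$$(0,0) + (1-\<alpha>) * X$$(1,1)"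
  "model_map \<alpha> u w X $$ (0,1) = u * X$$(0,1) + cnj w * X$$(1,0)"
  "model_map \<alpha> u w X $$ (1,0) = w * X$$(0,1) + cnj u * X$$(1,0)"
  "model_map \<alpha> u w X $$ (1,1) = (1-\<alpha>) * X$$(0,0) + \<alpha> * X$$(1,1)"
  by (simp_all add: model_map_def)

lemma model_map_linear: "linear_M2 (model_map \<alpha> u w)"
  unfolding linear_M2_def
proof (intro conjI ballI allI)
  fix A B :: "complex mat" assume "A \<in> carrier_mat 2 2" "B \<in> carrier_mat 2 2"
  thus "model_map \<alpha> u w (A + B) = model_map \<alpha> u w A + model_map \<alpha> u w B"
    by (intro eq_matI) (auto simp: model_map_def less_2_iff algebra_simps)
next
  fix A :: "complex mat" and c :: complex assume "A \<in> carrier_mat 2 2"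
  thus "model_map \<alpha> u w (c \<cdot>\<^sub>m A) = c \<cdot>\<^sub>m model_map \<alpha> u w A"
    by (intro eq_matI) (auto simp: model_map_def less_2_iff algebra_simps)
qed simp

lemma model_map_unital: "unital_M2 (model_map \<alpha> u w)"
  unfolding unital_M2_def by (rule eq_matI) (auto simp: model_map_def less_2_iff)

lemma model_map_trace_preserving: "trace_preserving_M2 (model_map \<alpha> u w)"
  unfolding trace_preserving_M2_def tr2_def
  by (auto simp: model_map_index[unfolded One_nat_def] algebra_simps)

lemma diagonal_mixing_product:
  fixes a x y :: real
  assumes "0 \<le> a" "a \<le> 1"
  shows "x * y \<le> (a * x + (1-a) * y) * ((1-a) * x + a * y)"
proof -
  have "(a * x + (1-a) * y) * ((1-a) * x + a * y) - x * y = a * (1-a) * (x - y)\<^sup>2"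
    by (simp add: power2_eq_square algebra_simps)
  moreover have "a * (1-a) * (x - y)\<^sup>2 \<ge> 0" using assms by simp
  ultimately show ?thesis by simp
qed

lemma offdiagonal_contraction:
  assumes "cmod u + cmod w \<le> 1"
  shows "cmod (u * b + cnj w * cnj b) \<le> cmod b"
proof -
  have "cmod (u * b + cnj w * cnj b) \<le> (cmod u + cmod w) * cmod b"
    using norm_triangle_ineq[of "u * b" "cnj w * cnj b"] by (simp add: norm_mult algebra_simps)
  also have "\<dots> \<le> cmod b" using assms mult_right_mono[OF assms, of "cmod b"] by simp
  finally show ?thesis .
qed

lemma model_map_positive:
  assumes \<alpha>: "\<alpha> = of_real a" "0 \<le> a" "a \<le> 1" and uw: "cmod u + cmod w \<le> 1"
  shows "positive_M2 (model_map \<alpha> u w)"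
  unfolding positive_M2_def
proof (intro allI impI)
  fix X assume psd: "psd2 X"
  define x y b where "x = Re (X$$(0,0))" and "y = Re (X$$(1,1))" and "b = X$$(0,1)"
  have X: "X$$(0,0) = of_real x" "X$$(1,1) = of_real y" "X$$(0,1) = b" "X$$(1,0) = cnj b"
    and nonneg: "x \<ge> 0" "y \<ge> 0" and det: "(cmod b)\<^sup>2 \<le> x * y"
    using psd unfolding psd2_iff x_def y_def b_def by (simp_all add: complex_eq_iff)
  have "(cmod (u * b + cnj w * cnj b))\<^sup>2 \<le> (cmod b)\<^sup>2"
    using offdiagonal_contraction[OF uw] by (intro power_mono) auto
  also have "\<dots> \<le> (a * x + (1-a) * y) * ((1-a) * x + a * y)"
    using det diagonal_mixing_product[OF \<alpha>(2,3), of x y] by linarith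
  finally have "(cmod (u * b + cnj w * cnj b))\<^sup>2 \<le> (a * x + (1-a) * y) * ((1-a) * x + a * y)" .
  with \<alpha> nonneg show "psd2 (model_map \<alpha> u w X)"
    unfolding psd2_iff by (simp add: model_map_index[unfolded One_nat_def] X[unfolded One_nat_def])
qed

lemma munit2_index:
  "munit2 l $$ (0,0) = (if l = 0 then 1 else 0)" "munit2 l $$ (0,1) = (if l = 1 then 1 else 0)"
  "munit2 l $$ (1,0) = (if l = 2 then 1 else 0)" "munit2 l $$ (1,1) = (if l = 3 then 1 else 0)"
proof -
  have "((0::nat) = l div 2 \<and> 0 = l mod 2) \<longleftrightarrow> l = 0" "((0::nat) = l div 2 \<and> 1 = l mod 2) \<longleftrightarrow> l = 1"
    "((1::nat) = l div 2 \<and> 0 = l mod 2) \<longleftrightarrow> l = 2" "((1::nat) = l div 2 \<and> 1 = l mod 2) \<longleftrightarrow> l = 3"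
    by presburger+
  thus "munit2 l $$ (0,0) = (if l = 0 then 1 else 0)" "munit2 l $$ (0,1) = (if l = 1 then 1 else 0)"
    "munit2 l $$ (1,0) = (if l = 2 then 1 else 0)" "munit2 l $$ (1,1) = (if l = 3 then 1 else 0)"
    by (simp_all add: munit2_def)
qed

lemma op_mat_model_map_charpoly_eval:
  "det (- char_matrix (op_mat (model_map \<alpha> u w)) x) =
     ((x-\<alpha>)*(x-\<alpha>) - (1-\<alpha>)*(1-\<alpha>)) * ((x-u)*(x-cnj u) - w * cnj w)"
proof -
  let ?M = "- char_matrix (op_mat (model_map \<alpha> u w)) x"
  have M: "?M \<in> carrier_mat 4 4" by simp
  have e: "\<And>k l. k < 4 \<Longrightarrow> l < 4 \<Longrightarrow>
      ?M $$ (k,l) = (if k = l then x else 0) - model_map \<alpha> u w (munit2 l) $$ (k div 2, k mod 2)"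
    by (simp add: char_matrix_def op_mat_index)
  show ?thesis unfolding det_4x4[OF M]
    by (simp add: e model_map_index munit2_index model_map_index[unfolded One_nat_def]
        munit2_index[unfolded One_nat_def]) (simp add: algebra_simps)
qed

lemma spec_M2_model_map:
  assumes roots: "\<And>x. (x-u)*(x-cnj u) - w*cnj w = (x-p)*(x-q)"
  shows "spec_M2 (model_map \<alpha> u w) = {#1, 2*\<alpha>-1, p, q#}"
proof -
  let ?P = "[:-1,1:] * [:-(2*\<alpha>-1),1:] * [:-p,1:] * [:-q,1:]"
  have "char_poly (op_mat (model_map \<alpha> u w)) = ?P"
  proof (rule poly_ext)
    fix x
    have "poly (char_poly (op_mat (model_map \<alpha> u w))) x = det (- char_matrix (op_mat (model_map \<alpha> u w)) x)"
      by (rule char_poly_matrix[OF op_mat_carrier])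
    also have "\<dots> = poly ?P x"
      unfolding op_mat_model_map_charpoly_eval roots by (simp add: algebra_simps)
    finally show "poly (char_poly (op_mat (model_map \<alpha> u w))) x = poly ?P x" .
  qed
  moreover have "proots ?P = {#1, 2*\<alpha>-1, p, q#}"
    by (simp only: proots_mult pCons_eq_0_iff mult_eq_0_iff one_neq_zero simp_thms
        proots_linear_factor minus_minus) simp
  ultimately show ?thesis unfolding spec_M2_def by simp
qed

lemma conj_invariant_triple:
  assumes "image_mset cnj {#a,b,c#} = {#a,b,c#}"
  shows "\<exists>r p q. {#a,b,c#} = {#r,p,q#} \<and> cnj r = r \<and> ((cnj p = p \<and> cnj q = q) \<or> q = cnj p)"
proof -
  have "cnj a \<in># image_mset cnj {#a,b,c#}" by simp
  hence "cnj a \<in># {#a,b,c#}" unfolding assms .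
  then consider "cnj a = a" | "cnj a = b" | "cnj a = c" by auto
  thus ?thesis
  proof cases
    case 1
    hence bc: "image_mset cnj {#b,c#} = {#b,c#}" using assms by simp
    have "cnj b \<in># image_mset cnj {#b,c#}" by simp
    hence "cnj b \<in># {#b,c#}" unfolding bc .
    hence "cnj b = b \<and> cnj c = c \<or> cnj b = c" using bc by auto
    thus ?thesis using 1 by (intro exI[of _ a] exI[of _ b] exI[of _ c]) auto
  next
    case 2
    hence "{#a,b,c#} = {#a, b, cnj c#}" using assms by (auto simp: add_mset_commute)
    hence "{#c#} = {#cnj c#}" by simp
    thus ?thesis using 2 by (intro exI[of _ c] exI[of _ a] exI[of _ b]) (auto simp: add_mset_commute)
  next
    case 3
    hence "{#a,c,b#} = {#a, c, cnj b#}" using assms by (auto simp: add_mset_commute)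
    hence "{#b#} = {#cnj b#}" by simp
    thus ?thesis using 3 by (intro exI[of _ b] exI[of _ a] exI[of _ c]) (auto simp: add_mset_commute)
  qed
qed

lemma conj_invariant_size4:
  assumes "size L = 4" "1 \<in># L" "image_mset cnj L = L"
  shows "\<exists>r p q. L = {#1, r, p, q#} \<and> cnj r = r \<and> ((cnj p = p \<and> cnj q = q) \<or> q = cnj p)"
proof -
  obtain L' where L: "L = add_mset 1 L'" using multi_member_split[OF assms(2)] by blast
  obtain xs where xs: "mset xs = L'" using ex_mset by blast
  have "length xs = 3" using assms(1) L xs by auto
  then obtain a b c where "L' = {#a,b,c#}" using xs by (auto simp: length_Suc_conv numeral_3_eq_3)
  with L assms(3) conj_invariant_triple[of a b c] show ?thesis by auto
qed

lemma off_diagonal_parameters: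
  assumes pq: "(cnj p = p \<and> cnj q = q) \<or> q = cnj p" and bounds: "cmod p \<le> 1" "cmod q \<le> 1"
  shows "\<exists>u w. cmod u + cmod w \<le> 1 \<and> (\<forall>x. (x-u)*(x-cnj u) - w*cnj w = (x-p)*(x-q))"
  using pq
proof
  assume "cnj p = p \<and> cnj q = q"
  then obtain P Q where pP: "p = of_real P" and qQ: "q = of_real Q"
    by (metis Reals_cnj_iff Reals_cases)
  define u w where "u = complex_of_real ((P+Q)/2)" and "w = complex_of_real ((P-Q)/2)"
  have "-1 \<le> P" "P \<le> 1" "-1 \<le> Q" "Q \<le> 1" using bounds pP qQ by (simp_all add: abs_le_iff)
  hence "\<bar>(P+Q)/2\<bar> + \<bar>(P-Q)/2\<bar> \<le> 1" by (auto simp: abs_if field_simps)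
  hence "cmod u + cmod w \<le> 1" unfolding u_def w_def norm_of_real .
  moreover have "(x-u)*(x-cnj u) - w*cnj w = (x-p)*(x-q)" for x
    unfolding u_def w_def pP qQ by (simp add: field_simps)
  ultimately show ?thesis by blast
next
  assume "q = cnj p"
  thus ?thesis using bounds by (intro exI[of _ p] exI[of _ 0]) simp
qed

lemma admissible_spectrum_realized:
  assumes r: "cnj r = r" "cmod r \<le> 1"
    and pq: "(cnj p = p \<and> cnj q = q) \<or> q = cnj p" "cmod p \<le> 1" "cmod q \<le> 1"
  shows "\<exists>T. linear_M2 T \<and> unital_M2 T \<and> trace_preserving_M2 T \<and> positive_M2 T \<and>
             spec_M2 T = {#1, r, p, q#}"
proof -
  define a where "a = (1 + Re r) / 2"
  have a: "0 \<le> a" "a \<le> 1" using abs_Re_le_cmod[of r] r(2) unfolding a_def by auto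
  have r_eq: "2 * of_real a - 1 = r" using r(1) unfolding a_def by (simp add: complex_eq_iff field_simps)
  obtain u w where uw: "cmod u + cmod w \<le> 1" and roots: "\<And>x. (x-u)*(x-cnj u) - w*cnj w = (x-p)*(x-q)"
    using off_diagonal_parameters[OF pq] by blast
  show ?thesis
    using model_map_linear model_map_unital model_map_trace_preserving
      model_map_positive[OF refl a uw] spec_M2_model_map[OF roots, of "of_real a"]
    unfolding r_eq by blast
qed

theorem theorem2:
  shows "(\<forall>T. linear_M2 T \<and> positive_M2 T \<and> trace_preserving_M2 T \<longrightarrow>
            (1 \<in># spec_M2 T \<and> image_mset cnj (spec_M2 T) = spec_M2 T) \<and>
            (\<forall>z \<in># spec_M2 T. cmod z \<le> 1))
       \<and> (\<forall>L :: complex multiset. size L = 4 \<and>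
            (1 \<in># L \<and> image_mset cnj L = L) \<and> (\<forall>z \<in># L. cmod z \<le> 1) \<longrightarrow>
            (\<exists>T. linear_M2 T \<and> unital_M2 T \<and> trace_preserving_M2 T \<and> positive_M2 T \<and>
                 spec_M2 T = L))"
proof (intro conjI allI impI ballI)
  fix T assume "linear_M2 T \<and> positive_M2 T \<and> trace_preserving_M2 T"
  hence lin: "linear_M2 T" and pos: "positive_M2 T" and tp: "trace_preserving_M2 T" by auto
  show "1 \<in># spec_M2 T" by (rule one_mem_spec_M2[OF tp])
  show "image_mset cnj (spec_M2 T) = spec_M2 T" by (rule spec_M2_conj_invariant[OF lin pos])
  show "cmod z \<le> 1" if "z \<in># spec_M2 T" for z by (rule spec_M2_unit_disc[OF lin pos tp that])
next
  fix L :: "complex multiset"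
  assume L: "size L = 4 \<and> (1 \<in># L \<and> image_mset cnj L = L) \<and> (\<forall>z \<in># L. cmod z \<le> 1)"
  then obtain r p q where L_eq: "L = {#1, r, p, q#}" and r: "cnj r = r"
    and pq: "(cnj p = p \<and> cnj q = q) \<or> q = cnj p"
    using conj_invariant_size4 by blast
  have "cmod r \<le> 1" "cmod p \<le> 1" "cmod q \<le> 1" using L unfolding L_eq by auto
  with admissible_spectrum_realized[OF r _ pq] show "\<exists>T. linear_M2 T \<and> unital_M2 T \<and>
      trace_preserving_M2 T \<and> positive_M2 T \<and> spec_M2 T = L"
    unfolding L_eq by blast
qed

end
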